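(* Let $H$ and $G$ be groups. The relation $\approx_2$ is an equivalence relation on $\mathrm{Crossed}(H,G)$; two normalized crossed systems $(\alpha,f)$, $(\alpha',f')$ satisfy $(\alpha,f)\approx_2(\alpha',f')$ if and only if they are isomorphic objects of $\mathcal{E}_2(H,G)$. Consequently there is a bijection between the set of objects of a skeleton of $\mathcal{E}_2(H,G)$ (i.e. the set of isomorphism classes of objects of $\mathcal{E}_2(H,G)$) and the quotient set $\mathrm{Crossed}(H,G)/\!\approx_2$.
   Context: For groups $H,G$ and a map $\alpha:G\to\mathrm{Aut}(H)$ write $g\triangleright h:=\alpha(g)(h)$ (and $g\triangleright' h:=\alpha'(g)(h)$). A normalized crossed system is a quadruple $(H,G,\alpha,f)$ with maps $\alpha:G\to\mathrm{Aut}(H)$, $f:G\times G\to H$, $f(1,1)=1$, such that for all $g_1,g_2,g_3\in G$, $h\in H$: (WA) $g_1\triangleright(g_2\triangleright h)=f(g_1,g_2)\big((g_1g_2)\triangleright h\big)f(g_1,g_2)^{-1}$ and (CC) $f(g_1,g_2)f(g_1g_2,g_3)=\big(g_1\triangleright f(g_2,g_3)\big)f(g_1,g_2g_3)$. $\mathrm{Crossed}(H,G)$ denotes the set of pairs $(\alpha,f)$ such that $(H,G,\alpha,f)$ is a normalized crossed system. The crossed product $H\#_\alpha^f G$ is the group on the set $H\times G$ with multiplication $(h_1,g_1)\cdot(h_2,g_2)=\big(h_1(g_1\triangleright h_2)f(g_1,g_2),g_1g_2\big)$ and unit $(1,1)$; let $i_H(h)=(h,1)$, $\pi_G(h,g)=g$.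 The category $\mathcal{E}_2(H,G)$ has object set $\mathrm{Crossed}(H,G)$, and a morphism $(\alpha,f)\to(\alpha',f')$ is a triple $(\eta,\psi,\gamma)$ of group homomorphisms $\eta:H\to H$, $\psi:H\#_\alpha^f G\to H\#_{\alpha'}^{f'}G$, $\gamma:G\to G$ with $\psi\circ i_H=i'_H\circ\eta$ and $\pi'_G\circ\psi=\gamma\circ\pi_G$; composition is componentwise. Define $(\alpha,f)\approx_2(\alpha',f')$ if there exist group isomorphisms $\eta:H\to H$, $\gamma:G\to G$ and a map $t:G\to H$ such that for all $h\in H$, $g,g_1,g_2\in G$: $g\triangleright' h=\eta\big(t(g)(\gamma^{-1}(g)\triangleright\eta^{-1}(h))t(g)^{-1}\big)$ and $f'(g_1,g_2)=\eta\big(t(g_1)(\gamma^{-1}(g_1)\triangleright t(g_2))f(\gamma^{-1}(g_1),\gamma^{-1}(g_2))t(g_1g_2)^{-1}\big)$. *)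

theory Defs
  imports "HOL-Algebra.Bij"
begin

definition Crossed :: "'h monoid \<Rightarrow> 'g monoid \<Rightarrow> (('g \<Rightarrow> 'h \<Rightarrow> 'h) \<times> ('g \<times> 'g \<Rightarrow> 'h)) set" where
  "Crossed H G = {(\<alpha>, f).
     \<alpha> \<in> carrier G \<rightarrow>\<^sub>E auto H \<and>
     f \<in> carrier G \<times> carrier G \<rightarrow>\<^sub>E carrier H \<and>
     f (\<one>\<^bsub>G\<^esub>, \<one>\<^bsub>G\<^esub>) = \<one>\<^bsub>H\<^esub> \<and>
     (\<forall>g1\<in>carrier G. \<forall>g2\<in>carrier G. \<forall>h\<in>carrier H.
        \<alpha> g1 (\<alpha> g2 h) = f (g1, g2) \<otimes>\<^bsub>H\<^esub> \<alpha> (g1 \<otimes>\<^bsub>G\<^esub> g2) h \<otimes>\<^bsub>H\<^esub> inv\<^bsub>H\<^esub> f (g1, g2)) \<and>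
     (\<forall>g1\<in>carrier G. \<forall>g2\<in>carrier G. \<forall>g3\<in>carrier G.
        f (g1, g2) \<otimes>\<^bsub>H\<^esub> f (g1 \<otimes>\<^bsub>G\<^esub> g2, g3) = \<alpha> g1 (f (g2, g3)) \<otimes>\<^bsub>H\<^esub> f (g1, g2 \<otimes>\<^bsub>G\<^esub> g3))}"

definition crossed_product :: "'h monoid \<Rightarrow> 'g monoid \<Rightarrow> ('g \<Rightarrow> 'h \<Rightarrow> 'h) \<Rightarrow> ('g \<times> 'g \<Rightarrow> 'h) \<Rightarrow> ('h \<times> 'g) monoid" where
  "crossed_product H G \<alpha> f =
     \<lparr>carrier = carrier H \<times> carrier G,
      mult = (\<lambda>(h1, g1) (h2, g2). (h1 \<otimes>\<^bsub>H\<^esub> \<alpha> g1 h2 \<otimes>\<^bsub>H\<^esub> f (g1, g2), g1 \<otimes>\<^bsub>G\<^esub> g2)),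
      one = (\<one>\<^bsub>H\<^esub>, \<one>\<^bsub>G\<^esub>)\<rparr>"

definition E2_mor :: "'h monoid \<Rightarrow> 'g monoid \<Rightarrow> ('g \<Rightarrow> 'h \<Rightarrow> 'h) \<times> ('g \<times> 'g \<Rightarrow> 'h)
     \<Rightarrow> ('g \<Rightarrow> 'h \<Rightarrow> 'h) \<times> ('g \<times> 'g \<Rightarrow> 'h)
     \<Rightarrow> ('h \<Rightarrow> 'h) \<Rightarrow> ('h \<times> 'g \<Rightarrow> 'h \<times> 'g) \<Rightarrow> ('g \<Rightarrow> 'g) \<Rightarrow> bool" where
  "E2_mor H G x y \<eta> \<psi> \<gamma> \<longleftrightarrow>
     \<eta> \<in> hom H H \<and>
     \<psi> \<in> hom (crossed_product H G (fst x) (snd x)) (crossed_product H G (fst y) (snd y)) \<and>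
     \<gamma> \<in> hom G G \<and>
     (\<forall>h\<in>carrier H. \<psi> (h, \<one>\<^bsub>G\<^esub>) = (\<eta> h, \<one>\<^bsub>G\<^esub>)) \<and>
     (\<forall>h\<in>carrier H. \<forall>g\<in>carrier G. snd (\<psi> (h, g)) = \<gamma> g)"

definition E2_isomorphic :: "'h monoid \<Rightarrow> 'g monoid \<Rightarrow> ('g \<Rightarrow> 'h \<Rightarrow> 'h) \<times> ('g \<times> 'g \<Rightarrow> 'h)
     \<Rightarrow> ('g \<Rightarrow> 'h \<Rightarrow> 'h) \<times> ('g \<times> 'g \<Rightarrow> 'h) \<Rightarrow> bool" where
  "E2_isomorphic H G x y \<longleftrightarrow>
     (\<exists>\<eta> \<psi> \<gamma> \<eta>' \<psi>' \<gamma>'. E2_mor H G x y \<eta> \<psi> \<gamma> \<and> E2_mor H G y x \<eta>' \<psi>' \<gamma>' \<and>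
        (\<forall>h\<in>carrier H. \<eta>' (\<eta> h) = h \<and> \<eta> (\<eta>' h) = h) \<and>
        (\<forall>g\<in>carrier G. \<gamma>' (\<gamma> g) = g \<and> \<gamma> (\<gamma>' g) = g) \<and>
        (\<forall>p\<in>carrier H \<times> carrier G. \<psi>' (\<psi> p) = p \<and> \<psi> (\<psi>' p) = p))"

definition approx2 :: "'h monoid \<Rightarrow> 'g monoid \<Rightarrow> ('g \<Rightarrow> 'h \<Rightarrow> 'h) \<times> ('g \<times> 'g \<Rightarrow> 'h)
     \<Rightarrow> ('g \<Rightarrow> 'h \<Rightarrow> 'h) \<times> ('g \<times> 'g \<Rightarrow> 'h) \<Rightarrow> bool" where
  "approx2 H G x y \<longleftrightarrow>
     (case x of (\<alpha>, f) \<Rightarrow> case y of (\<alpha>', f') \<Rightarrow>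
       (\<exists>\<eta> \<gamma> t. \<eta> \<in> iso H H \<and> \<gamma> \<in> iso G G \<and> t \<in> carrier G \<rightarrow> carrier H \<and>
          (\<forall>g\<in>carrier G. \<forall>h\<in>carrier H.
             \<alpha>' g h = \<eta> (t g \<otimes>\<^bsub>H\<^esub> \<alpha> (inv_into (carrier G) \<gamma> g) (inv_into (carrier H) \<eta> h)
                          \<otimes>\<^bsub>H\<^esub> inv\<^bsub>H\<^esub> t g)) \<and>
          (\<forall>g1\<in>carrier G. \<forall>g2\<in>carrier G.
             f' (g1, g2) = \<eta> (t g1 \<otimes>\<^bsub>H\<^esub> \<alpha> (inv_into (carrier G) \<gamma> g1) (t g2)
                 \<otimes>\<^bsub>H\<^esub> f (inv_into (carrier G) \<gamma> g1, inv_into (carrier G) \<gamma> g2)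
                 \<otimes>\<^bsub>H\<^esub> inv\<^bsub>H\<^esub> t (g1 \<otimes>\<^bsub>G\<^esub> g2)))))"

definition approx2_rel where
  "approx2_rel H G = {(x, y). x \<in> Crossed H G \<and> y \<in> Crossed H G \<and> approx2 H G x y}"

definition E2_iso_rel where
  "E2_iso_rel H G = {(x, y). x \<in> Crossed H G \<and> y \<in> Crossed H G \<and> E2_isomorphic H G x y}"

end

theory Submission
  imports Defs
begin

lemma (in group) inv_cancel_left [simp]:
  "x \<in> carrier G \<Longrightarrow> y \<in> carrier G \<Longrightarrow> inv x \<otimes> (x \<otimes> y) = y"
  by (simp add: m_assoc [symmetric])

lemma bij_betw_self_inv_into:
  assumes "bij_betw \<phi> A A" and "x \<in> A"
  shows "inv_into A \<phi> x \<in> A \<and> \<phi> (inv_into A \<phi> x) = x \<and> inv_into A \<phi> (\<phi> x) = x"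
  using assms by (auto simp: bij_betw_def inv_into_into f_inv_into_f)

text \<open>The inverse of a bijective multiplicative map is multiplicative.\<close>

lemma inv_into_hom:
  assumes hom: "\<phi> \<in> hom A B" and bij: "bij_betw \<phi> (carrier A) (carrier B)"
    and closed: "\<And>x y. x \<in> carrier A \<Longrightarrow> y \<in> carrier A \<Longrightarrow> x \<otimes>\<^bsub>A\<^esub> y \<in> carrier A"
  shows "inv_into (carrier A) \<phi> \<in> hom B A"
proof -
  let ?\<phi>' = "inv_into (carrier A) \<phi>"
  have into: "\<And>x. x \<in> carrier B \<Longrightarrow> ?\<phi>' x \<in> carrier A"
    using bij by (metis bij_betw_def inv_into_into)
  have right: "\<And>x. x \<in> carrier B \<Longrightarrow> \<phi> (?\<phi>' x) = x"
    using bij by (metis bij_betw_def f_inv_into_f)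
  show ?thesis unfolding hom_def
  proof (intro CollectI conjI Pi_I ballI)
    fix x y assume x: "x \<in> carrier B" and y: "y \<in> carrier B"
    show "?\<phi>' (x \<otimes>\<^bsub>B\<^esub> y) = ?\<phi>' x \<otimes>\<^bsub>A\<^esub> ?\<phi>' y"
    proof (rule inv_into_f_eq)
      show "inj_on \<phi> (carrier A)" using bij by (rule bij_betw_imp_inj_on)
      show "?\<phi>' x \<otimes>\<^bsub>A\<^esub> ?\<phi>' y \<in> carrier A" using closed into x y by simp
      show "\<phi> (?\<phi>' x \<otimes>\<^bsub>A\<^esub> ?\<phi>' y) = x \<otimes>\<^bsub>B\<^esub> y"
        using hom_mult[OF hom into[OF x] into[OF y]] right x y by simp
    qed
  qed (rule into)
qed

text \<open>Composition of homomorphisms, written pointwise as in the composition of \<open>\<E>\<^sub>2\<close>-morphisms.\<close>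

lemma hom_comp:
  "\<phi>1 \<in> hom A B \<Longrightarrow> \<phi>2 \<in> hom B C \<Longrightarrow> (\<lambda>p. \<phi>2 (\<phi>1 p)) \<in> hom A C"
  using hom_compose[of \<phi>1 A B \<phi>2 C] by (simp add: comp_def)

lemma crossed_product_carrier [simp]:
  "carrier (crossed_product H G \<alpha> f) = carrier H \<times> carrier G"
  by (simp add: crossed_product_def)

lemma crossed_product_mult [simp]:
  "(h1, g1) \<otimes>\<^bsub>crossed_product H G \<alpha> f\<^esub> (h2, g2)
     = (h1 \<otimes>\<^bsub>H\<^esub> \<alpha> g1 h2 \<otimes>\<^bsub>H\<^esub> f (g1, g2), g1 \<otimes>\<^bsub>G\<^esub> g2)"
  by (simp add: crossed_product_def)

lemma E2_mor_id: "E2_mor H G x x (\<lambda>h. h) (\<lambda>p. p) (\<lambda>g. g)"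
  unfolding E2_mor_def hom_def by simp

lemma E2_mor_comp:
  assumes m1: "E2_mor H G x y \<eta>1 \<psi>1 \<gamma>1" and m2: "E2_mor H G y z \<eta>2 \<psi>2 \<gamma>2"
  shows "E2_mor H G x z (\<lambda>h. \<eta>2 (\<eta>1 h)) (\<lambda>p. \<psi>2 (\<psi>1 p)) (\<lambda>g. \<gamma>2 (\<gamma>1 g))"
  unfolding E2_mor_def
proof (intro conjI ballI)
  show "(\<lambda>h. \<eta>2 (\<eta>1 h)) \<in> hom H H" "(\<lambda>g. \<gamma>2 (\<gamma>1 g)) \<in> hom G G"
    "(\<lambda>p. \<psi>2 (\<psi>1 p)) \<in> hom (crossed_product H G (fst x) (snd x)) (crossed_product H G (fst z) (snd z))"
    using m1 m2 unfolding E2_mor_def by (blast intro: hom_comp)+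
next
  fix h assume h: "h \<in> carrier H"
  have "\<eta>1 h \<in> carrier H" using m1 h unfolding E2_mor_def by (blast intro: hom_in_carrier)
  then show "\<psi>2 (\<psi>1 (h, \<one>\<^bsub>G\<^esub>)) = (\<eta>2 (\<eta>1 h), \<one>\<^bsub>G\<^esub>)"
    using m1 m2 h unfolding E2_mor_def by simp
next
  fix h g assume h: "h \<in> carrier H" and g: "g \<in> carrier G"
  have "\<psi>1 (h, g) \<in> carrier H \<times> carrier G"
    using m1 h g unfolding E2_mor_def by (metis crossed_product_carrier hom_in_carrier mem_Sigma_iff)
  then obtain h' where "\<psi>1 (h, g) = (h', \<gamma>1 g)" "h' \<in> carrier H" "\<gamma>1 g \<in> carrier G"
    using m1 h g unfolding E2_mor_def by (metis mem_Sigma_iff prod.collapse)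
  then show "snd (\<psi>2 (\<psi>1 (h, g))) = \<gamma>2 (\<gamma>1 g)"
    using m2 unfolding E2_mor_def by simp
qed

lemma E2_isomorphic_trans:
  assumes xy: "E2_isomorphic H G x y" and yz: "E2_isomorphic H G y z"
  shows "E2_isomorphic H G x z"
proof -
  obtain \<eta>1 \<psi>1 \<gamma>1 \<eta>1' \<psi>1' \<gamma>1' where
    m1: "E2_mor H G x y \<eta>1 \<psi>1 \<gamma>1" "E2_mor H G y x \<eta>1' \<psi>1' \<gamma>1'" and
    i1: "\<forall>h\<in>carrier H. \<eta>1' (\<eta>1 h) = h \<and> \<eta>1 (\<eta>1' h) = h"
        "\<forall>g\<in>carrier G. \<gamma>1' (\<gamma>1 g) = g \<and> \<gamma>1 (\<gamma>1' g) = g"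
        "\<forall>p\<in>carrier H \<times> carrier G. \<psi>1' (\<psi>1 p) = p \<and> \<psi>1 (\<psi>1' p) = p"
    using xy unfolding E2_isomorphic_def by blast
  obtain \<eta>2 \<psi>2 \<gamma>2 \<eta>2' \<psi>2' \<gamma>2' where
    m2: "E2_mor H G y z \<eta>2 \<psi>2 \<gamma>2" "E2_mor H G z y \<eta>2' \<psi>2' \<gamma>2'" and
    i2: "\<forall>h\<in>carrier H. \<eta>2' (\<eta>2 h) = h \<and> \<eta>2 (\<eta>2' h) = h"
        "\<forall>g\<in>carrier G. \<gamma>2' (\<gamma>2 g) = g \<and> \<gamma>2 (\<gamma>2' g) = g"
        "\<forall>p\<in>carrier H \<times> carrier G. \<psi>2' (\<psi>2 p) = p \<and> \<psi>2 (\<psi>2' p) = p"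
    using yz unfolding E2_isomorphic_def by blast
  have "\<eta>1 \<in> hom H H" "\<eta>2' \<in> hom H H" "\<gamma>1 \<in> hom G G" "\<gamma>2' \<in> hom G G"
    "\<psi>1 \<in> hom (crossed_product H G (fst x) (snd x)) (crossed_product H G (fst y) (snd y))"
    "\<psi>2' \<in> hom (crossed_product H G (fst z) (snd z)) (crossed_product H G (fst y) (snd y))"
    using m1(1) m2(2) unfolding E2_mor_def by simp_all
  then have closed: "\<And>h. h \<in> carrier H \<Longrightarrow> \<eta>1 h \<in> carrier H \<and> \<eta>2' h \<in> carrier H"
    "\<And>g. g \<in> carrier G \<Longrightarrow> \<gamma>1 g \<in> carrier G \<and> \<gamma>2' g \<in> carrier G"
    "\<And>p. p \<in> carrier H \<times> carrier G \<Longrightarrow> \<psi>1 p \<in> carrier H \<times> carrier G \<and> \<psi>2' p \<in> carrier H \<times> carrier G"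
    by (metis crossed_product_carrier hom_in_carrier)+
  show ?thesis unfolding E2_isomorphic_def
  proof (intro exI conjI)
    show "E2_mor H G x z (\<lambda>h. \<eta>2 (\<eta>1 h)) (\<lambda>p. \<psi>2 (\<psi>1 p)) (\<lambda>g. \<gamma>2 (\<gamma>1 g))"
      using m1(1) m2(1) by (rule E2_mor_comp)
    show "E2_mor H G z x (\<lambda>h. \<eta>1' (\<eta>2' h)) (\<lambda>p. \<psi>1' (\<psi>2' p)) (\<lambda>g. \<gamma>1' (\<gamma>2' g))"
      using m2(2) m1(2) by (rule E2_mor_comp)
    show "\<forall>p\<in>carrier H \<times> carrier G. \<psi>1' (\<psi>2' (\<psi>2 (\<psi>1 p))) = p \<and> \<psi>2 (\<psi>1 (\<psi>1' (\<psi>2' p))) = p"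
    proof
      fix p assume p: "p \<in> carrier H \<times> carrier G"
      have "\<psi>2' (\<psi>2 (\<psi>1 p)) = \<psi>1 p" "\<psi>1 (\<psi>1' (\<psi>2' p)) = \<psi>2' p"
        using bspec[OF i2(3) conjunct1[OF closed(3)[OF p]]] bspec[OF i1(3) conjunct2[OF closed(3)[OF p]]]
        by simp_all
      then show "\<psi>1' (\<psi>2' (\<psi>2 (\<psi>1 p))) = p \<and> \<psi>2 (\<psi>1 (\<psi>1' (\<psi>2' p))) = p"
        using bspec[OF i1(3) p] bspec[OF i2(3) p] by simp
    qed
  qed (use i1(1,2) i2(1,2) closed(1,2) in simp_all)
qed

lemma E2_iso_rel_equiv: "equiv (Crossed H G) (E2_iso_rel H G)"
proof (rule equivI)
  show "refl_on (Crossed H G) (E2_iso_rel H G)"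
    using E2_mor_id unfolding refl_on_def E2_iso_rel_def E2_isomorphic_def by blast
  show "sym (E2_iso_rel H G)"
    unfolding sym_def E2_iso_rel_def E2_isomorphic_def by blast
  show "trans (E2_iso_rel H G)"
    unfolding trans_def E2_iso_rel_def using E2_isomorphic_trans by blast
qed (auto simp: E2_iso_rel_def)

locale two_groups = H: group H + G: group G for H :: "'h monoid" and G :: "'g monoid"

locale crossed = two_groups +
  fixes \<alpha> :: "'g \<Rightarrow> 'h \<Rightarrow> 'h" and f :: "'g \<times> 'g \<Rightarrow> 'h"
  assumes crossed: "(\<alpha>, f) \<in> Crossed H G"
begin

lemma alpha_auto: "g \<in> carrier G \<Longrightarrow> \<alpha> g \<in> auto H"
  using crossed unfolding Crossed_def by (auto dest: PiE_mem)

lemma f_closed [simp]: "g1 \<in> carrier G \<Longrightarrow> g2 \<in> carrier G \<Longrightarrow> f (g1, g2) \<in> carrier H"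
  using crossed unfolding Crossed_def by (auto dest: PiE_mem)

lemma f_one_one: "f (\<one>\<^bsub>G\<^esub>, \<one>\<^bsub>G\<^esub>) = \<one>\<^bsub>H\<^esub>"
  using crossed unfolding Crossed_def by simp

lemma weak_action:
  "\<lbrakk>g1 \<in> carrier G; g2 \<in> carrier G; h \<in> carrier H\<rbrakk> \<Longrightarrow>
    \<alpha> g1 (\<alpha> g2 h) = f (g1, g2) \<otimes>\<^bsub>H\<^esub> \<alpha> (g1 \<otimes>\<^bsub>G\<^esub> g2) h \<otimes>\<^bsub>H\<^esub> inv\<^bsub>H\<^esub> f (g1, g2)"
  using crossed unfolding Crossed_def by simp

lemma cocycle:
  "\<lbrakk>g1 \<in> carrier G; g2 \<in> carrier G; g3 \<in> carrier G\<rbrakk> \<Longrightarrow>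
    f (g1, g2) \<otimes>\<^bsub>H\<^esub> f (g1 \<otimes>\<^bsub>G\<^esub> g2, g3) = \<alpha> g1 (f (g2, g3)) \<otimes>\<^bsub>H\<^esub> f (g1, g2 \<otimes>\<^bsub>G\<^esub> g3)"
  using crossed unfolding Crossed_def by simp

lemma alpha_group_hom: "g \<in> carrier G \<Longrightarrow> group_hom H H (\<alpha> g)"
  using alpha_auto by (simp add: group_hom_def group_hom_axioms_def H.group_axioms auto_def)

lemma alpha_closed [simp]: "g \<in> carrier G \<Longrightarrow> h \<in> carrier H \<Longrightarrow> \<alpha> g h \<in> carrier H"
  by (rule group_hom.hom_closed[OF alpha_group_hom])

lemma alpha_mult [simp]:
  "g \<in> carrier G \<Longrightarrow> a \<in> carrier H \<Longrightarrow> b \<in> carrier H \<Longrightarrow> \<alpha> g (a \<otimes>\<^bsub>H\<^esub> b) = \<alpha> g a \<otimes>\<^bsub>H\<^esub> \<alpha> g b"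
  by (rule group_hom.hom_mult[OF alpha_group_hom])

lemma alpha_one [simp]: "g \<in> carrier G \<Longrightarrow> \<alpha> g \<one>\<^bsub>H\<^esub> = \<one>\<^bsub>H\<^esub>"
  by (rule group_hom.hom_one[OF alpha_group_hom])

lemma alpha_inv [simp]:
  "g \<in> carrier G \<Longrightarrow> a \<in> carrier H \<Longrightarrow> \<alpha> g (inv\<^bsub>H\<^esub> a) = inv\<^bsub>H\<^esub> (\<alpha> g a)"
  by (rule group_hom.hom_inv[OF alpha_group_hom])

lemma crossed_product_closed:
  "p \<in> carrier (crossed_product H G \<alpha> f) \<Longrightarrow> q \<in> carrier (crossed_product H G \<alpha> f) \<Longrightarrow>
    p \<otimes>\<^bsub>crossed_product H G \<alpha> f\<^esub> q \<in> carrier (crossed_product H G \<alpha> f)"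
  by (cases p; cases q) simp

text \<open>By (WA) at \<open>g1 = g2 = 1\<close>, the automorphism \<open>\<alpha> 1\<close> is idempotent, hence the identity;
  this is what makes \<open>(h, 1) \<cdot> (1, g) = (h, g)\<close> in the crossed product.\<close>

lemma alpha_unit [simp]:
  assumes h: "h \<in> carrier H" shows "\<alpha> \<one>\<^bsub>G\<^esub> h = h"
proof -
  have "inj_on (\<alpha> \<one>\<^bsub>G\<^esub>) (carrier H)"
    using alpha_auto[of "\<one>\<^bsub>G\<^esub>"] by (simp add: auto_def Bij_def bij_betw_def)
  moreover have "\<alpha> \<one>\<^bsub>G\<^esub> (\<alpha> \<one>\<^bsub>G\<^esub> h) = \<alpha> \<one>\<^bsub>G\<^esub> h"
    using weak_action[of "\<one>\<^bsub>G\<^esub>" "\<one>\<^bsub>G\<^esub>" h] h by (simp add: f_one_one)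
  ultimately show ?thesis using h by (simp add: inj_on_def)
qed

text \<open>By (CC) with two unit arguments, \<open>f (1, g)\<close> and \<open>f (g, 1)\<close> are idempotent, hence trivial.\<close>

lemma f_unit_left [simp]: assumes g: "g \<in> carrier G" shows "f (\<one>\<^bsub>G\<^esub>, g) = \<one>\<^bsub>H\<^esub>"
proof -
  have "f (\<one>\<^bsub>G\<^esub>, g) \<otimes>\<^bsub>H\<^esub> f (\<one>\<^bsub>G\<^esub>, g) = f (\<one>\<^bsub>G\<^esub>, g)"
    using cocycle[of "\<one>\<^bsub>G\<^esub>" "\<one>\<^bsub>G\<^esub>" g] g by (simp add: f_one_one)
  then show ?thesis using g by simp
qed

lemma f_unit_right [simp]: assumes g: "g \<in> carrier G" shows "f (g, \<one>\<^bsub>G\<^esub>) = \<one>\<^bsub>H\<^esub>"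
proof -
  have "f (g, \<one>\<^bsub>G\<^esub>) \<otimes>\<^bsub>H\<^esub> f (g, \<one>\<^bsub>G\<^esub>) = f (g, \<one>\<^bsub>G\<^esub>)"
    using cocycle[of g "\<one>\<^bsub>G\<^esub>" "\<one>\<^bsub>G\<^esub>"] g by (simp add: f_one_one)
  then show ?thesis using g by simp
qed

end

locale two_crossed = X: crossed H G \<alpha> f + Y: crossed H G \<alpha>' f'
  for H :: "'h monoid" and G :: "'g monoid" and \<alpha> f \<alpha>' f'

text \<open>Such a \<psi> is determined
  by \<eta>, \<gamma> and the map \<open>twist g = fst (\<psi> (1, g))\<close>; the homomorphism property of \<psi>
  translates into a conjugation law and a cocycle law for \<open>twist\<close>.\<close>

locale E2_morphism = two_crossed +
  fixes \<eta> :: "'h \<Rightarrow> 'h" and \<psi> :: "'h \<times> 'g \<Rightarrow> 'h \<times> 'g" and \<gamma> :: "'g \<Rightarrow> 'g"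
  assumes mor: "E2_mor H G (\<alpha>, f) (\<alpha>', f') \<eta> \<psi> \<gamma>"
begin

lemma psi_hom: "\<psi> \<in> hom (crossed_product H G \<alpha> f) (crossed_product H G \<alpha>' f')"
  and psi_unit: "h \<in> carrier H \<Longrightarrow> \<psi> (h, \<one>\<^bsub>G\<^esub>) = (\<eta> h, \<one>\<^bsub>G\<^esub>)"
  and psi_snd: "h \<in> carrier H \<Longrightarrow> g \<in> carrier G \<Longrightarrow> snd (\<psi> (h, g)) = \<gamma> g"
  using mor unfolding E2_mor_def by simp_all

sublocale eta: group_hom H H \<eta>
  using mor by (simp add: E2_mor_def group_hom_def group_hom_axioms_def X.H.group_axioms)

sublocale gamma: group_hom G G \<gamma>
  using mor by (simp add: E2_mor_def group_hom_def group_hom_axioms_def X.G.group_axioms)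

lemma psi_mult:
  "p \<in> carrier H \<times> carrier G \<Longrightarrow> q \<in> carrier H \<times> carrier G \<Longrightarrow>
    \<psi> (p \<otimes>\<^bsub>crossed_product H G \<alpha> f\<^esub> q) = \<psi> p \<otimes>\<^bsub>crossed_product H G \<alpha>' f'\<^esub> \<psi> q"
  using psi_hom by (simp add: hom_mult)

definition twist :: "'g \<Rightarrow> 'h" where "twist g = fst (\<psi> (\<one>\<^bsub>H\<^esub>, g))"

lemma twist_closed [simp]: "g \<in> carrier G \<Longrightarrow> twist g \<in> carrier H"
  using hom_in_carrier[OF psi_hom, of "(\<one>\<^bsub>H\<^esub>, g)"] by (auto simp: twist_def mem_Times_iff)

lemma twist_unit: "twist \<one>\<^bsub>G\<^esub> = \<one>\<^bsub>H\<^esub>"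
  by (simp add: twist_def psi_unit)

lemma psi_on_G: "g \<in> carrier G \<Longrightarrow> \<psi> (\<one>\<^bsub>H\<^esub>, g) = (twist g, \<gamma> g)"
  by (simp add: twist_def psi_snd prod_eq_iff)

text \<open>Since \<open>(h, g) = (h, 1) \<cdot> (1, g)\<close>, the map \<psi> is \<open>(h, g) \<mapsto> (\<eta> h \<cdot> twist g, \<gamma> g)\<close>.\<close>

lemma psi_decomp:
  assumes h: "h \<in> carrier H" and g: "g \<in> carrier G"
  shows "\<psi> (h, g) = (\<eta> h \<otimes>\<^bsub>H\<^esub> twist g, \<gamma> g)"
proof -
  have "\<psi> (h, g) = \<psi> ((h, \<one>\<^bsub>G\<^esub>) \<otimes>\<^bsub>crossed_product H G \<alpha> f\<^esub> (\<one>\<^bsub>H\<^esub>, g))"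
    using h g by simp
  also have "\<dots> = \<psi> (h, \<one>\<^bsub>G\<^esub>) \<otimes>\<^bsub>crossed_product H G \<alpha>' f'\<^esub> \<psi> (\<one>\<^bsub>H\<^esub>, g)"
    using h g by (intro psi_mult) simp_all
  also have "\<dots> = (\<eta> h \<otimes>\<^bsub>H\<^esub> twist g, \<gamma> g)"
    using h g by (simp add: psi_unit psi_on_G)
  finally show ?thesis .
qed

text \<open>Comparing \<open>\<psi>\<close> on \<open>(1, g) \<cdot> (k, 1)\<close> and on \<open>(1, g1) \<cdot> (1, g2)\<close>.\<close>

lemma twist_conj:
  assumes g: "g \<in> carrier G" and k: "k \<in> carrier H"
  shows "twist g \<otimes>\<^bsub>H\<^esub> \<alpha>' (\<gamma> g) (\<eta> k) = \<eta> (\<alpha> g k) \<otimes>\<^bsub>H\<^esub> twist g"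
proof -
  have "\<psi> ((\<one>\<^bsub>H\<^esub>, g) \<otimes>\<^bsub>crossed_product H G \<alpha> f\<^esub> (k, \<one>\<^bsub>G\<^esub>))
      = \<psi> (\<one>\<^bsub>H\<^esub>, g) \<otimes>\<^bsub>crossed_product H G \<alpha>' f'\<^esub> \<psi> (k, \<one>\<^bsub>G\<^esub>)"
    using g k by (intro psi_mult) simp_all
  then show ?thesis
    using g k by (simp add: psi_decomp psi_on_G twist_unit)
qed

lemma twist_cocycle:
  assumes g1: "g1 \<in> carrier G" and g2: "g2 \<in> carrier G"
  shows "twist g1 \<otimes>\<^bsub>H\<^esub> \<alpha>' (\<gamma> g1) (twist g2) \<otimes>\<^bsub>H\<^esub> f' (\<gamma> g1, \<gamma> g2)
           = \<eta> (f (g1, g2)) \<otimes>\<^bsub>H\<^esub> twist (g1 \<otimes>\<^bsub>G\<^esub> g2)"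
proof -
  have "\<psi> ((\<one>\<^bsub>H\<^esub>, g1) \<otimes>\<^bsub>crossed_product H G \<alpha> f\<^esub> (\<one>\<^bsub>H\<^esub>, g2))
      = \<psi> (\<one>\<^bsub>H\<^esub>, g1) \<otimes>\<^bsub>crossed_product H G \<alpha>' f'\<^esub> \<psi> (\<one>\<^bsub>H\<^esub>, g2)"
    using g1 g2 by (intro psi_mult) simp_all
  then show ?thesis
    using g1 g2 by (simp add: psi_decomp psi_on_G)
qed


text \<open>If \<eta> and \<gamma> are bijective, then \<open>(\<alpha>, f) \<approx>\<^sub>2 (\<alpha>', f')\<close>, witnessed by \<eta>, \<gamma> and
  \<open>t g = (\<eta>\<inverse> (twist (\<gamma>\<inverse> g)))\<inverse>\<close>: the conjugation and cocycle laws of \<open>twist\<close>,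
  transported along \<eta> and \<gamma>, are exactly the two defining equations of \<open>\<approx>\<^sub>2\<close>.\<close>

lemma approx2_if_bij:
  assumes bij_eta: "bij_betw \<eta> (carrier H) (carrier H)"
    and bij_gamma: "bij_betw \<gamma> (carrier G) (carrier G)"
  shows "approx2 H G (\<alpha>, f) (\<alpha>', f')"
proof -
  define \<eta>' where "\<eta>' = inv_into (carrier H) \<eta>"
  define \<gamma>' where "\<gamma>' = inv_into (carrier G) \<gamma>"
  have \<eta>': "\<And>h. h \<in> carrier H \<Longrightarrow> \<eta>' h \<in> carrier H \<and> \<eta> (\<eta>' h) = h \<and> \<eta>' (\<eta> h) = h"
    unfolding \<eta>'_def by (rule bij_betw_self_inv_into[OF bij_eta])
  have \<gamma>': "\<And>g. g \<in> carrier G \<Longrightarrow> \<gamma>' g \<in> carrier G \<and> \<gamma> (\<gamma>' g) = g \<and> \<gamma>' (\<gamma> g) = g"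
    unfolding \<gamma>'_def by (rule bij_betw_self_inv_into[OF bij_gamma])
  define t where "t g = inv\<^bsub>H\<^esub> (\<eta>' (twist (\<gamma>' g)))" for g
  have eta_t: "\<And>g. g \<in> carrier G \<Longrightarrow> \<eta> (t g) = inv\<^bsub>H\<^esub> twist (\<gamma>' g)"
    using \<eta>' \<gamma>' by (simp add: t_def)
  show ?thesis
    unfolding approx2_def case_prod_conv
  proof (intro exI[of _ \<eta>] exI[of _ \<gamma>] exI[of _ t] conjI ballI)
    show "\<eta> \<in> iso H H" by (rule isoI[OF eta.homh bij_eta])
    show "\<gamma> \<in> iso G G" by (rule isoI[OF gamma.homh bij_gamma])
    show "t \<in> carrier G \<rightarrow> carrier H" unfolding t_def using \<eta>' \<gamma>' by simp
  next
    fix g' h assume g': "g' \<in> carrier G" and h: "h \<in> carrier H"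
    define g where "g = \<gamma>' g'"
    define k where "k = \<eta>' h"
    define C where "C = twist g"
    have g: "g \<in> carrier G" "\<gamma> g = g'" and k: "k \<in> carrier H" "\<eta> k = h"
      using g' h \<eta>' \<gamma>' by (simp_all add: g_def k_def)
    have C: "C \<in> carrier H" using g by (simp add: C_def)
    have "C \<otimes>\<^bsub>H\<^esub> \<alpha>' g' h = \<eta> (\<alpha> g k) \<otimes>\<^bsub>H\<^esub> C"
      using twist_conj[of g k] g k by (simp add: C_def)
    then have conj: "\<eta> (\<alpha> g k) = C \<otimes>\<^bsub>H\<^esub> \<alpha>' g' h \<otimes>\<^bsub>H\<^esub> inv\<^bsub>H\<^esub> C"
      using C g k g' h by (simp add: X.H.inv_solve_right)
    have "\<eta> (t g' \<otimes>\<^bsub>H\<^esub> \<alpha> (inv_into (carrier G) \<gamma> g') (inv_into (carrier H) \<eta> h) \<otimes>\<^bsub>H\<^esub> inv\<^bsub>H\<^esub> t g')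
        = inv\<^bsub>H\<^esub> C \<otimes>\<^bsub>H\<^esub> \<eta> (\<alpha> g k) \<otimes>\<^bsub>H\<^esub> C"
      using g' h g k C \<eta>' \<gamma>'
      by (simp add: eta_t C_def g_def k_def \<eta>'_def[symmetric] \<gamma>'_def[symmetric] t_def)
    also have "\<dots> = \<alpha>' g' h" using C g' h by (simp add: conj X.H.m_assoc)
    finally show "\<alpha>' g' h = \<eta> (t g' \<otimes>\<^bsub>H\<^esub> \<alpha> (inv_into (carrier G) \<gamma> g') (inv_into (carrier H) \<eta> h)
        \<otimes>\<^bsub>H\<^esub> inv\<^bsub>H\<^esub> t g')" by simp
  next
    fix g1' g2' assume g1': "g1' \<in> carrier G" and g2': "g2' \<in> carrier G"
    define g1 where "g1 = \<gamma>' g1'"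
    define g2 where "g2 = \<gamma>' g2'"
    have g1: "g1 \<in> carrier G" "\<gamma> g1 = g1'" and g2: "g2 \<in> carrier G" "\<gamma> g2 = g2'"
      using g1' g2' \<gamma>' by (simp_all add: g1_def g2_def)
    have g12: "\<gamma>' (g1' \<otimes>\<^bsub>G\<^esub> g2') = g1 \<otimes>\<^bsub>G\<^esub> g2"
      using g1 g2 \<gamma>' by (metis X.G.m_closed gamma.hom_mult)
    define C1 where "C1 = twist g1"
    define C2 where "C2 = twist g2"
    define C12 where "C12 = twist (g1 \<otimes>\<^bsub>G\<^esub> g2)"
    define A where "A = \<alpha>' g1' C2"
    have C: "C1 \<in> carrier H" "C2 \<in> carrier H" "C12 \<in> carrier H" "A \<in> carrier H"
      using g1 g2 g1' by (simp_all add: C1_def C2_def C12_def A_def)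
    have "C1 \<otimes>\<^bsub>H\<^esub> A = \<eta> (\<alpha> g1 (\<eta>' C2)) \<otimes>\<^bsub>H\<^esub> C1"
      using twist_conj[of g1 "\<eta>' C2"] g1 C \<eta>' by (simp add: C1_def A_def)
    then have conj: "\<eta> (\<alpha> g1 (\<eta>' C2)) = C1 \<otimes>\<^bsub>H\<^esub> A \<otimes>\<^bsub>H\<^esub> inv\<^bsub>H\<^esub> C1"
      using C g1 \<eta>' by (simp add: X.H.inv_solve_right)
    have "C1 \<otimes>\<^bsub>H\<^esub> A \<otimes>\<^bsub>H\<^esub> f' (g1', g2') = \<eta> (f (g1, g2)) \<otimes>\<^bsub>H\<^esub> C12"
      using twist_cocycle[of g1 g2] g1 g2 by (simp add: C1_def C2_def C12_def A_def)
    then have cocyc: "\<eta> (f (g1, g2)) = C1 \<otimes>\<^bsub>H\<^esub> A \<otimes>\<^bsub>H\<^esub> f' (g1', g2') \<otimes>\<^bsub>H\<^esub> inv\<^bsub>H\<^esub> C12"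
      using C g1 g2 g1' g2' by (simp add: X.H.inv_solve_right)
    have "\<eta> (t g1' \<otimes>\<^bsub>H\<^esub> \<alpha> (inv_into (carrier G) \<gamma> g1') (t g2')
            \<otimes>\<^bsub>H\<^esub> f (inv_into (carrier G) \<gamma> g1', inv_into (carrier G) \<gamma> g2')
            \<otimes>\<^bsub>H\<^esub> inv\<^bsub>H\<^esub> t (g1' \<otimes>\<^bsub>G\<^esub> g2'))
       = inv\<^bsub>H\<^esub> C1 \<otimes>\<^bsub>H\<^esub> inv\<^bsub>H\<^esub> (\<eta> (\<alpha> g1 (\<eta>' C2))) \<otimes>\<^bsub>H\<^esub> \<eta> (f (g1, g2)) \<otimes>\<^bsub>H\<^esub> C12"
      using g1 g2 g1' g2' C \<eta>'
      by (simp add: t_def g12 C1_def C2_def C12_def g1_def g2_def \<gamma>'_def[symmetric])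
    also have "\<dots> = f' (g1', g2')"
      using C g1' g2' by (simp add: conj cocyc X.H.m_assoc X.H.inv_mult_group)
    finally show "f' (g1', g2') = \<eta> (t g1' \<otimes>\<^bsub>H\<^esub> \<alpha> (inv_into (carrier G) \<gamma> g1') (t g2')
        \<otimes>\<^bsub>H\<^esub> f (inv_into (carrier G) \<gamma> g1', inv_into (carrier G) \<gamma> g2')
        \<otimes>\<^bsub>H\<^esub> inv\<^bsub>H\<^esub> t (g1' \<otimes>\<^bsub>G\<^esub> g2'))" by simp
  qed
qed


text \<open>A morphism whose three components are bijective is an isomorphism of \<open>\<E>\<^sub>2(H,G)\<close>:
  the componentwise inverses again form a morphism.\<close>

lemma E2_isomorphic_if_bij:
  assumes bij_eta: "bij_betw \<eta> (carrier H) (carrier H)"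
    and bij_gamma: "bij_betw \<gamma> (carrier G) (carrier G)"
    and bij_psi: "bij_betw \<psi> (carrier H \<times> carrier G) (carrier H \<times> carrier G)"
  shows "E2_isomorphic H G (\<alpha>, f) (\<alpha>', f')"
proof -
  define \<eta>' where "\<eta>' = inv_into (carrier H) \<eta>"
  define \<gamma>' where "\<gamma>' = inv_into (carrier G) \<gamma>"
  define \<psi>' where "\<psi>' = inv_into (carrier H \<times> carrier G) \<psi>"
  have inv_eta: "\<And>h. h \<in> carrier H \<Longrightarrow> \<eta>' h \<in> carrier H \<and> \<eta> (\<eta>' h) = h \<and> \<eta>' (\<eta> h) = h"
    unfolding \<eta>'_def by (rule bij_betw_self_inv_into[OF bij_eta])
  have inv_gamma: "\<And>g. g \<in> carrier G \<Longrightarrow> \<gamma>' g \<in> carrier G \<and> \<gamma> (\<gamma>' g) = g \<and> \<gamma>' (\<gamma> g) = g"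
    unfolding \<gamma>'_def by (rule bij_betw_self_inv_into[OF bij_gamma])
  have inv_psi: "\<And>p. p \<in> carrier H \<times> carrier G \<Longrightarrow>
      \<psi>' p \<in> carrier H \<times> carrier G \<and> \<psi> (\<psi>' p) = p \<and> \<psi>' (\<psi> p) = p"
    unfolding \<psi>'_def by (rule bij_betw_self_inv_into[OF bij_psi])
  have inverse_mor: "E2_mor H G (\<alpha>', f') (\<alpha>, f) \<eta>' \<psi>' \<gamma>'"
    unfolding E2_mor_def fst_conv snd_conv
  proof (intro conjI ballI)
    show "\<eta>' \<in> hom H H" unfolding \<eta>'_def
      using X.H.iso_set_sym[OF isoI[OF eta.homh bij_eta]] by (rule iso_imp_homomorphism)
    show "\<gamma>' \<in> hom G G" unfolding \<gamma>'_def
      using X.G.iso_set_sym[OF isoI[OF gamma.homh bij_gamma]] by (rule iso_imp_homomorphism)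
    show "\<psi>' \<in> hom (crossed_product H G \<alpha>' f') (crossed_product H G \<alpha> f)" unfolding \<psi>'_def
      using inv_into_hom[OF psi_hom _ X.crossed_product_closed] bij_psi by simp
  next
    fix h assume h: "h \<in> carrier H"
    show "\<psi>' (h, \<one>\<^bsub>G\<^esub>) = (\<eta>' h, \<one>\<^bsub>G\<^esub>)"
      using inv_psi[of "(\<eta>' h, \<one>\<^bsub>G\<^esub>)"] inv_eta h by (simp add: psi_unit)
  next
    fix h g assume h: "h \<in> carrier H" and g: "g \<in> carrier G"
    obtain a b where ab: "\<psi>' (h, g) = (a, b)" "a \<in> carrier H" "b \<in> carrier G"
      using inv_psi[of "(h, g)"] h g by fastforce
    then have "\<gamma> b = g" using inv_psi[of "(h, g)"] h g psi_snd[of a b] by simp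
    then show "snd (\<psi>' (h, g)) = \<gamma>' g" using ab inv_gamma[OF ab(3)] by simp
  qed
  show ?thesis unfolding E2_isomorphic_def
    by (intro exI[of _ \<eta>] exI[of _ \<psi>] exI[of _ \<gamma>] exI[of _ \<eta>'] exI[of _ \<psi>'] exI[of _ \<gamma>']
        conjI ballI mor inverse_mor) (simp_all add: inv_eta inv_gamma inv_psi)
qed

end

text \<open>From it we build the map
  \<open>\<psi> (h, g) = (\<eta> (h \<cdot> t (\<gamma> g)\<inverse>), \<gamma> g)\<close> and show that \<open>(\<eta>, \<psi>, \<gamma>)\<close> is a bijective morphism,
  hence an isomorphism, of \<open>\<E>\<^sub>2(H,G)\<close>.\<close>

locale approx2_witness = two_crossed +
  fixes \<eta> :: "'h \<Rightarrow> 'h" and \<gamma> :: "'g \<Rightarrow> 'g" and t :: "'g \<Rightarrow> 'h"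
  assumes eta_iso: "\<eta> \<in> iso H H" and gamma_iso: "\<gamma> \<in> iso G G"
    and t_closed: "t \<in> carrier G \<rightarrow> carrier H"
    and alpha'_eq: "\<forall>g\<in>carrier G. \<forall>h\<in>carrier H.
      \<alpha>' g h = \<eta> (t g \<otimes>\<^bsub>H\<^esub> \<alpha> (inv_into (carrier G) \<gamma> g) (inv_into (carrier H) \<eta> h)
                   \<otimes>\<^bsub>H\<^esub> inv\<^bsub>H\<^esub> t g)"
    and f'_eq: "\<forall>g1\<in>carrier G. \<forall>g2\<in>carrier G.
      f' (g1, g2) = \<eta> (t g1 \<otimes>\<^bsub>H\<^esub> \<alpha> (inv_into (carrier G) \<gamma> g1) (t g2)
          \<otimes>\<^bsub>H\<^esub> f (inv_into (carrier G) \<gamma> g1, inv_into (carrier G) \<gamma> g2)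
          \<otimes>\<^bsub>H\<^esub> inv\<^bsub>H\<^esub> t (g1 \<otimes>\<^bsub>G\<^esub> g2))"
begin

lemma bij_eta: "bij_betw \<eta> (carrier H) (carrier H)"
  and bij_gamma: "bij_betw \<gamma> (carrier G) (carrier G)"
  using eta_iso gamma_iso by (simp_all add: iso_def)

sublocale eta: group_hom H H \<eta>
  using eta_iso by (simp add: iso_def group_hom_def group_hom_axioms_def X.H.group_axioms)

sublocale gamma: group_hom G G \<gamma>
  using gamma_iso by (simp add: iso_def group_hom_def group_hom_axioms_def X.G.group_axioms)

lemma t_in_carrier [simp]: "g \<in> carrier G \<Longrightarrow> t g \<in> carrier H"
  using t_closed by (simp add: Pi_iff)

lemma alpha'_transport:
  assumes g: "g \<in> carrier G" and x: "x \<in> carrier H"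
  shows "\<alpha>' (\<gamma> g) (\<eta> x) = \<eta> (t (\<gamma> g) \<otimes>\<^bsub>H\<^esub> \<alpha> g x \<otimes>\<^bsub>H\<^esub> inv\<^bsub>H\<^esub> t (\<gamma> g))"
  using alpha'_eq g x bij_betw_self_inv_into[OF bij_eta x] bij_betw_self_inv_into[OF bij_gamma g]
  by simp

lemma f'_transport:
  assumes g1: "g1 \<in> carrier G" and g2: "g2 \<in> carrier G"
  shows "f' (\<gamma> g1, \<gamma> g2) = \<eta> (t (\<gamma> g1) \<otimes>\<^bsub>H\<^esub> \<alpha> g1 (t (\<gamma> g2)) \<otimes>\<^bsub>H\<^esub> f (g1, g2)
           \<otimes>\<^bsub>H\<^esub> inv\<^bsub>H\<^esub> t (\<gamma> (g1 \<otimes>\<^bsub>G\<^esub> g2)))"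
  using f'_eq g1 g2 bij_betw_self_inv_into[OF bij_gamma g1] bij_betw_self_inv_into[OF bij_gamma g2]
  by simp

text \<open>Normalization of \<open>f\<close> and \<open>f'\<close> forces \<open>t 1 = 1\<close>.\<close>

lemma t_unit: "t \<one>\<^bsub>G\<^esub> = \<one>\<^bsub>H\<^esub>"
proof -
  have "\<one>\<^bsub>H\<^esub> = \<eta> (t \<one>\<^bsub>G\<^esub>)"
    using f'_transport[of "\<one>\<^bsub>G\<^esub>" "\<one>\<^bsub>G\<^esub>"] by (simp add: X.f_one_one Y.f_one_one X.H.m_assoc)
  then have "\<eta> (t \<one>\<^bsub>G\<^esub>) = \<eta> \<one>\<^bsub>H\<^esub>" by (metis eta.hom_one)
  then show ?thesis
    using bij_eta by (simp add: bij_betw_def inj_on_def)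
qed

definition induced :: "'h \<times> 'g \<Rightarrow> 'h \<times> 'g" where
  "induced p = (\<eta> (fst p \<otimes>\<^bsub>H\<^esub> inv\<^bsub>H\<^esub> t (\<gamma> (snd p))), \<gamma> (snd p))"

lemma induced_hom: "induced \<in> hom (crossed_product H G \<alpha> f) (crossed_product H G \<alpha>' f')"
  unfolding hom_def
proof (intro CollectI conjI Pi_I ballI)
  fix p assume "p \<in> carrier (crossed_product H G \<alpha> f)"
  then show "induced p \<in> carrier (crossed_product H G \<alpha>' f')" by (auto simp: induced_def)
next
  fix p q assume p: "p \<in> carrier (crossed_product H G \<alpha> f)" and q: "q \<in> carrier (crossed_product H G \<alpha> f)"
  obtain h1 g1 where p': "p = (h1, g1)" and h1: "h1 \<in> carrier H" and g1: "g1 \<in> carrier G" using p by auto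
  obtain h2 g2 where q': "q = (h2, g2)" and h2: "h2 \<in> carrier H" and g2: "g2 \<in> carrier G" using q by auto
  define t1 where "t1 = t (\<gamma> g1)"
  define t2 where "t2 = t (\<gamma> g2)"
  define t12 where "t12 = t (\<gamma> (g1 \<otimes>\<^bsub>G\<^esub> g2))"
  have tt: "t1 \<in> carrier H" "t2 \<in> carrier H" "t12 \<in> carrier H"
    using g1 g2 by (simp_all add: t1_def t2_def t12_def)
  have "fst (induced p \<otimes>\<^bsub>crossed_product H G \<alpha>' f'\<^esub> induced q)
      = \<eta> (h1 \<otimes>\<^bsub>H\<^esub> inv\<^bsub>H\<^esub> t1) \<otimes>\<^bsub>H\<^esub> \<alpha>' (\<gamma> g1) (\<eta> (h2 \<otimes>\<^bsub>H\<^esub> inv\<^bsub>H\<^esub> t2)) \<otimes>\<^bsub>H\<^esub> f' (\<gamma> g1, \<gamma> g2)"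
    by (simp add: p' q' induced_def t1_def t2_def)
  also have "\<dots> = \<eta> ((h1 \<otimes>\<^bsub>H\<^esub> inv\<^bsub>H\<^esub> t1) \<otimes>\<^bsub>H\<^esub> (t1 \<otimes>\<^bsub>H\<^esub> \<alpha> g1 (h2 \<otimes>\<^bsub>H\<^esub> inv\<^bsub>H\<^esub> t2) \<otimes>\<^bsub>H\<^esub> inv\<^bsub>H\<^esub> t1)
      \<otimes>\<^bsub>H\<^esub> (t1 \<otimes>\<^bsub>H\<^esub> \<alpha> g1 t2 \<otimes>\<^bsub>H\<^esub> f (g1, g2) \<otimes>\<^bsub>H\<^esub> inv\<^bsub>H\<^esub> t12))"
    using alpha'_transport[OF g1, of "h2 \<otimes>\<^bsub>H\<^esub> inv\<^bsub>H\<^esub> t2"] f'_transport[OF g1 g2] tt h1 h2 g1 g2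
    by (simp add: t1_def t2_def t12_def)
  also have "\<dots> = \<eta> (h1 \<otimes>\<^bsub>H\<^esub> \<alpha> g1 h2 \<otimes>\<^bsub>H\<^esub> f (g1, g2) \<otimes>\<^bsub>H\<^esub> inv\<^bsub>H\<^esub> t12)"
    using tt h1 h2 g1 g2 by (simp add: X.H.m_assoc)
  also have "\<dots> = fst (induced (p \<otimes>\<^bsub>crossed_product H G \<alpha> f\<^esub> q))"
    by (simp add: p' q' induced_def t12_def)
  finally show "induced (p \<otimes>\<^bsub>crossed_product H G \<alpha> f\<^esub> q)
      = induced p \<otimes>\<^bsub>crossed_product H G \<alpha>' f'\<^esub> induced q"
    using g1 g2 by (simp add: p' q' induced_def prod_eq_iff)
qed

lemma induced_E2_mor: "E2_mor H G (\<alpha>, f) (\<alpha>', f') \<eta> induced \<gamma>"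
  unfolding E2_mor_def using eta.homh induced_hom gamma.homh by (simp add: induced_def t_unit)

text \<open>The inverse of \<open>induced\<close> is \<open>(h, g) \<mapsto> (\<eta>\<inverse> h \<cdot> t g, \<gamma>\<inverse> g)\<close>.\<close>

lemma induced_bij: "bij_betw induced (carrier H \<times> carrier G) (carrier H \<times> carrier G)"
proof (rule bij_betw_byWitness)
  let ?\<eta>' = "inv_into (carrier H) \<eta>" and ?\<gamma>' = "inv_into (carrier G) \<gamma>"
  let ?inverse = "\<lambda>p. (?\<eta>' (fst p) \<otimes>\<^bsub>H\<^esub> t (snd p), ?\<gamma>' (snd p))"
  note inv_eta = bij_betw_self_inv_into[OF bij_eta] and inv_gamma = bij_betw_self_inv_into[OF bij_gamma]
  show "\<forall>p\<in>carrier H \<times> carrier G. ?inverse (induced p) = p"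
    using inv_eta inv_gamma
    by (auto simp: induced_def X.H.m_assoc simp del: eta.hom_mult eta.hom_inv)
  show "\<forall>p\<in>carrier H \<times> carrier G. induced (?inverse p) = p"
    using inv_eta inv_gamma
    by (auto simp: induced_def X.H.m_assoc simp del: eta.hom_mult eta.hom_inv)
  show "induced ` (carrier H \<times> carrier G) \<subseteq> carrier H \<times> carrier G"
    by (auto simp: induced_def)
  show "?inverse ` (carrier H \<times> carrier G) \<subseteq> carrier H \<times> carrier G"
    using inv_eta inv_gamma by auto
qed

lemma E2_isomorphic: "E2_isomorphic H G (\<alpha>, f) (\<alpha>', f')"
proof -
  interpret E2_morphism H G \<alpha> f \<alpha>' f' \<eta> induced \<gamma>
    by unfold_locales (rule induced_E2_mor)
  show ?thesis using bij_eta bij_gamma induced_bij by (rule E2_isomorphic_if_bij)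
qed

end

context two_crossed
begin

lemma approx2_imp_E2_isomorphic:
  assumes "approx2 H G (\<alpha>, f) (\<alpha>', f')"
  shows "E2_isomorphic H G (\<alpha>, f) (\<alpha>', f')"
proof -
  obtain \<eta> \<gamma> t where "approx2_witness H G \<alpha> f \<alpha>' f' \<eta> \<gamma> t"
    using assms unfolding approx2_def approx2_witness_def approx2_witness_axioms_def
    by (auto intro: two_crossed_axioms)
  then show ?thesis by (rule approx2_witness.E2_isomorphic)
qed

lemma E2_isomorphic_imp_approx2:
  assumes "E2_isomorphic H G (\<alpha>, f) (\<alpha>', f')"
  shows "approx2 H G (\<alpha>, f) (\<alpha>', f')"
proof -
  obtain \<eta> \<psi> \<gamma> \<eta>' \<gamma>' where mor: "E2_mor H G (\<alpha>, f) (\<alpha>', f') \<eta> \<psi> \<gamma>"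
    and inv_eta: "\<forall>h\<in>carrier H. \<eta>' (\<eta> h) = h \<and> \<eta> (\<eta>' h) = h"
    and inv_gamma: "\<forall>g\<in>carrier G. \<gamma>' (\<gamma> g) = g \<and> \<gamma> (\<gamma>' g) = g"
    and homs: "\<eta>' \<in> hom H H" "\<gamma>' \<in> hom G G"
    using assms unfolding E2_isomorphic_def E2_mor_def by blast
  interpret E2_morphism H G \<alpha> f \<alpha>' f' \<eta> \<psi> \<gamma>
    by unfold_locales (rule mor)
  show ?thesis
  proof (rule approx2_if_bij)
    show "bij_betw \<eta> (carrier H) (carrier H)"
      using inv_eta homs(1) by (intro bij_betw_byWitness[where f' = \<eta>']) (auto simp: hom_in_carrier)
    show "bij_betw \<gamma> (carrier G) (carrier G)"
      using inv_gamma homs(2) by (intro bij_betw_byWitness[where f' = \<gamma>']) (auto simp: hom_in_carrier)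
  qed
qed

end

theorem theorem3p6:
  fixes H :: "'h monoid" and G :: "'g monoid"
  assumes "group H" and "group G"
  shows "equiv (Crossed H G) (approx2_rel H G)
    \<and> (\<forall>x\<in>Crossed H G. \<forall>y\<in>Crossed H G. approx2 H G x y \<longleftrightarrow> E2_isomorphic H G x y)
    \<and> (\<exists>\<Phi>. bij_betw \<Phi> (Crossed H G // E2_iso_rel H G) (Crossed H G // approx2_rel H G))"
proof -
  have iff: "\<forall>x\<in>Crossed H G. \<forall>y\<in>Crossed H G. approx2 H G x y \<longleftrightarrow> E2_isomorphic H G x y"
  proof (intro ballI)
    fix x y assume "x \<in> Crossed H G" "y \<in> Crossed H G"
    moreover obtain \<alpha> f \<alpha>' f' where "x = (\<alpha>, f)" "y = (\<alpha>', f')" by fastforce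
    ultimately interpret two_crossed H G \<alpha> f \<alpha>' f'
      using assms by (simp add: two_crossed_def crossed_def crossed_axioms_def two_groups_def)
    show "approx2 H G x y \<longleftrightarrow> E2_isomorphic H G x y"
      using approx2_imp_E2_isomorphic E2_isomorphic_imp_approx2 \<open>x = (\<alpha>, f)\<close> \<open>y = (\<alpha>', f')\<close> by blast
  qed
  then have same_relation: "approx2_rel H G = E2_iso_rel H G"
    unfolding approx2_rel_def E2_iso_rel_def by auto
  have "bij_betw id (Crossed H G // E2_iso_rel H G) (Crossed H G // approx2_rel H G)"
    by (simp add: same_relation)
  then show ?thesis
    using iff E2_iso_rel_equiv same_relation by auto
qed

end
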